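(* Let $C$ be a projective linear code of length $n$ over $\mathbb{Z}_4$ of type $4^{k_1}2^{k_2}$ with exactly two nonzero Lee weights, and let $G\in\mathbb{Z}_4^{(k_1+k_2)\times n}$ be a generator matrix of $C$. If $C$ is Plotkin-optimal, then $w_L(\mathbf{x}G)=n$ for all $\mathbf{x}\in\mathbb{Z}_4^{k_1+k_2}\setminus(2\mathbb{Z}_4)^{k_1+k_2}$.
   Context: A linear code of length $n$ over $\mathbb{Z}_4$ is a $\mathbb{Z}_4$-submodule of $\mathbb{Z}_4^n$, of type $4^{k_1}2^{k_2}$ if isomorphic to $\mathbb{Z}_4^{k_1}\times\mathbb{Z}_2^{k_2}$. A generator matrix is a matrix whose rows generate the code and no proper subset of whose rows does. Lee weight: $w_L(0)=0,w_L(1)=1,w_L(2)=2,w_L(3)=1$, additive on vectors. Plotkin-optimal: minimum nonzero Lee weight equals $\lfloor\frac{|C|}{|C|-1}n\rfloor$. Projective: the dual with respect to $\sum x_iy_i\in\mathbb{Z}_4$ has minimum Lee distance at least $3$. $2\mathbb{Z}_4=\{0,2\}$. *)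

theory Defs
  imports Complex_Main "HOL-Library.Numeral_Type"
begin

type_synonym z4 = "4"

definition vecs :: "nat \<Rightarrow> (nat \<Rightarrow> z4) set" where
  "vecs n = {v. \<forall>i\<ge>n. v i = 0}"

definition lee :: "z4 \<Rightarrow> nat" where
  "lee a = (if a = 0 then 0 else if a = 2 then 2 else 1)"

definition lee_weight :: "nat \<Rightarrow> (nat \<Rightarrow> z4) \<Rightarrow> nat" where
  "lee_weight n v = (\<Sum>j<n. lee (v j))"

definition linear_code :: "nat \<Rightarrow> (nat \<Rightarrow> z4) set \<Rightarrow> bool" where
  "linear_code n C \<longleftrightarrow> C \<subseteq> vecs n \<and> (\<lambda>_. 0) \<in> C \<and>
     (\<forall>u\<in>C. \<forall>v\<in>C. (\<lambda>j. u j + v j) \<in> C) \<and> (\<forall>a::z4. \<forall>v\<in>C. (\<lambda>j. a * v j) \<in> C)"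

text \<open>Z4^k1 x Z2^k2, with Z2 realised as the subgroup 2Z4 = {0,2} of Z4.\<close>
definition model_group :: "nat \<Rightarrow> nat \<Rightarrow> (nat \<Rightarrow> z4) set" where
  "model_group k1 k2 = {x \<in> vecs (k1 + k2). \<forall>i. k1 \<le> i \<and> i < k1 + k2 \<longrightarrow> x i \<in> {0, 2}}"

definition code_type :: "(nat \<Rightarrow> z4) set \<Rightarrow> nat \<Rightarrow> nat \<Rightarrow> bool" where
  "code_type C k1 k2 \<longleftrightarrow> (\<exists>f. bij_betw f (model_group k1 k2) C \<and>
     (\<forall>x\<in>model_group k1 k2. \<forall>y\<in>model_group k1 k2. f (\<lambda>i. x i + y i) = (\<lambda>j. f x j + f y j)))"

definition lincomb :: "nat set \<Rightarrow> (nat \<Rightarrow> z4) \<Rightarrow> (nat \<Rightarrow> nat \<Rightarrow> z4) \<Rightarrow> (nat \<Rightarrow> z4)" where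
  "lincomb S x G = (\<lambda>j. \<Sum>i\<in>S. x i * G i j)"

definition row_span :: "nat set \<Rightarrow> (nat \<Rightarrow> nat \<Rightarrow> z4) \<Rightarrow> (nat \<Rightarrow> z4) set" where
  "row_span S G = {lincomb S x G | x. True}"

definition generator_matrix :: "nat \<Rightarrow> (nat \<Rightarrow> nat \<Rightarrow> z4) \<Rightarrow> (nat \<Rightarrow> z4) set \<Rightarrow> bool" where
  "generator_matrix m G C \<longleftrightarrow> row_span {..<m} G = C \<and>
     (\<forall>S. S \<subset> {..<m} \<longrightarrow> row_span S G \<noteq> C)"

definition dual_code :: "nat \<Rightarrow> (nat \<Rightarrow> z4) set \<Rightarrow> (nat \<Rightarrow> z4) set" where
  "dual_code n C = {y \<in> vecs n. \<forall>x\<in>C. (\<Sum>j<n. x j * y j) = 0}"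

definition projective :: "nat \<Rightarrow> (nat \<Rightarrow> z4) set \<Rightarrow> bool" where
  "projective n C \<longleftrightarrow> (\<forall>y\<in>dual_code n C. \<forall>z\<in>dual_code n C. y \<noteq> z \<longrightarrow> lee_weight n (\<lambda>j. y j - z j) \<ge> 3)"

definition nonzero_weights :: "nat \<Rightarrow> (nat \<Rightarrow> z4) set \<Rightarrow> nat set" where
  "nonzero_weights n C = {lee_weight n v | v. v \<in> C \<and> v \<noteq> (\<lambda>_. 0)}"

definition plotkin_optimal :: "nat \<Rightarrow> (nat \<Rightarrow> z4) set \<Rightarrow> bool" where
  "plotkin_optimal n C \<longleftrightarrow>
     int (Min (nonzero_weights n C)) = \<lfloor>real (card C) / (real (card C) - 1) * real n\<rfloor>"

end

theory Submission
  imports Defs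
begin

(* Fix a coordinate i and let K be the set of codewords xG with x_i a unit of Z4.
   Minimality of G keeps 0 out of K, so by Plotkin-optimality every word of K has
   Lee weight at least n.  Projectivity gives, for every position j, a codeword c
   with c_j a unit; translation by 2c maps K onto itself and swaps the Lee weights
   lee(a) and lee(a + 2), which sum to 2.  Hence the weights of K average exactly n,
   so they all equal n. *)

lemma z4_cases: "(a::z4) = 0 \<or> a = 1 \<or> a = 2 \<or> a = 3"
proof (induct a)
  case (of_int z)
  then have "z = 0 \<or> z = 1 \<or> z = 2 \<or> z = 3" by auto
  then show ?case by auto
qed

lemma lee_add_2: "lee a + lee (a + 2) = 2"
  using z4_cases[of a] by (auto simp: lee_def)

lemma z4_unit_mult_self: "(a::z4) \<notin> {0, 2} \<Longrightarrow> a * a = 1"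
  using z4_cases[of a] by auto

lemma z4_2_mult_unit: "(a::z4) \<notin> {0, 2} \<Longrightarrow> 2 * a = 2"
  using z4_cases[of a] by auto

lemma z4_unit_add_2_mult: "(a::z4) \<notin> {0, 2} \<Longrightarrow> a + 2 * b \<notin> {0, 2}"
  using z4_cases[of a] z4_cases[of b] by auto

lemma z4_2_mult_add_self: "2 * (a::z4) + 2 * a = 0"
  using z4_cases[of a] by auto

lemma finite_vecs: "finite (vecs n)"
proof -
  have "vecs n = {f. \<forall>x. (x \<in> {..<n} \<longrightarrow> f x \<in> UNIV) \<and> (x \<notin> {..<n} \<longrightarrow> f x = (0::z4))}"
    unfolding vecs_def by auto
  moreover have "finite {f. \<forall>x. (x \<in> {..<n} \<longrightarrow> f x \<in> UNIV) \<and> (x \<notin> {..<n} \<longrightarrow> f x = (0::z4))}"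
    by (rule finite_set_of_finite_funs) simp_all
  ultimately show ?thesis by simp
qed

lemma linear_code_finite: "linear_code n C \<Longrightarrow> finite C"
  using finite_vecs finite_subset unfolding linear_code_def by blast

lemma lincomb_add:
  "lincomb S (\<lambda>l. x l + y l) G = (\<lambda>j. lincomb S x G j + lincomb S y G j)"
  unfolding lincomb_def by (simp add: distrib_right sum.distrib)

lemma lincomb_cmult: "lincomb S (\<lambda>l. a * x l) G = (\<lambda>j. a * lincomb S x G j)"
  unfolding lincomb_def by (simp add: sum_distrib_left mult.assoc)

lemma lincomb_remove:
  assumes "finite S" and "i \<in> S"
  shows "lincomb S x G j = x i * G i j + lincomb (S - {i}) x G j"
  unfolding lincomb_def using assms by (simp add: sum.remove)

lemma row_span_mono:
  assumes "finite T" and "S \<subseteq> T"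
  shows "row_span S G \<subseteq> row_span T G"
proof
  fix v assume "v \<in> row_span S G"
  then obtain x where v: "v = lincomb S x G" unfolding row_span_def by auto
  have "lincomb S x G = lincomb T (\<lambda>l. if l \<in> S then x l else 0) G"
    unfolding lincomb_def using assms
    by (auto intro!: sum.mono_neutral_cong_left)
  then show "v \<in> row_span T G" unfolding v row_span_def by blast
qed

lemma row_span_remove_dependent_row:
  assumes "finite S" and "i \<in> S" and row_i: "G i = lincomb (S - {i}) w G"
  shows "row_span (S - {i}) G = row_span S G"
proof
  show "row_span (S - {i}) G \<subseteq> row_span S G"
    using assms(1) by (intro row_span_mono) auto
next
  show "row_span S G \<subseteq> row_span (S - {i}) G"
  proof
    fix v assume "v \<in> row_span S G"
    then obtain x where v: "v = lincomb S x G" unfolding row_span_def by auto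
    have "v = lincomb (S - {i}) (\<lambda>l. x i * w l + x l) G"
    proof
      fix j
      show "v j = lincomb (S - {i}) (\<lambda>l. x i * w l + x l) G j"
        unfolding v lincomb_remove[OF assms(1,2)] row_i lincomb_add lincomb_cmult ..
    qed
    then show "v \<in> row_span (S - {i}) G" unfolding row_span_def by blast
  qed
qed

(* A combination with a unit coefficient on row i would make row i redundant. *)
lemma generator_matrix_lincomb_nonzero:
  assumes gen: "generator_matrix m G C" and "i < m" and unit: "x i \<notin> {0, 2}"
  shows "lincomb {..<m} x G \<noteq> (\<lambda>_. 0)"
proof
  assume zero: "lincomb {..<m} x G = (\<lambda>_. 0)"
  have i: "i \<in> {..<m}" using \<open>i < m\<close> by simp
  have "G i = lincomb ({..<m} - {i}) (\<lambda>l. - x i * x l) G"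
  proof
    fix j
    have "x i * G i j + lincomb ({..<m} - {i}) x G j = 0"
      using fun_cong[OF zero, of j] lincomb_remove[OF _ i] by simp
    then have "x i * x i * G i j = x i * - lincomb ({..<m} - {i}) x G j"
      by (metis add_eq_0_iff2 mult.assoc)
    then show "G i j = lincomb ({..<m} - {i}) (\<lambda>l. - x i * x l) G j"
      using z4_unit_mult_self[OF unit] lincomb_cmult[of _ "- x i" x G] by simp
  qed
  then have "row_span ({..<m} - {i}) G = C"
    using gen row_span_remove_dependent_row[OF _ i] unfolding generator_matrix_def by simp
  moreover have "{..<m} - {i} \<subset> {..<m}" using i by auto
  ultimately show False using gen unfolding generator_matrix_def by blast
qed

lemma projective_coordinate_unit:
  assumes proj: "projective n C" and "j < n"
  shows "\<exists>c\<in>C. c j \<notin> {0, 2}"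
proof (rule ccontr)
  assume "\<not> (\<exists>c\<in>C. c j \<notin> {0, 2})"
  then have even: "c j * 2 = 0" if "c \<in> C" for c
    using that by auto
  define y :: "nat \<Rightarrow> z4" where "y l = (if l = j then 2 else 0)" for l
  have "y \<in> dual_code n C"
  proof -
    have "(\<Sum>l<n. c l * y l) = (\<Sum>l<n. if l = j then c j * 2 else 0)" for c
      by (rule sum.cong) (auto simp: y_def)
    then have "(\<Sum>l<n. c l * y l) = c j * 2" for c
      using \<open>j < n\<close> by simp
    then show ?thesis using even \<open>j < n\<close> unfolding dual_code_def vecs_def y_def by auto
  qed
  moreover have "(\<lambda>_. 0) \<in> dual_code n C" unfolding dual_code_def vecs_def by auto
  moreover have "y \<noteq> (\<lambda>_. 0)" unfolding y_def by (auto dest: fun_cong[of _ _ j])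
  ultimately have "3 \<le> lee_weight n (\<lambda>l. y l - 0)"
    using proj unfolding projective_def by blast
  moreover have "lee_weight n (\<lambda>l. y l - 0) = (\<Sum>l<n. if l = j then 2 else 0)"
    unfolding lee_weight_def by (rule sum.cong) (auto simp: y_def lee_def)
  then have "lee_weight n (\<lambda>l. y l - 0) = 2"
    using \<open>j < n\<close> by simp
  ultimately show False by simp
qed

lemma plotkin_optimal_lee_weight_ge:
  assumes opt: "plotkin_optimal n C" and code: "linear_code n C"
    and "v \<in> C" and "v \<noteq> (\<lambda>_. 0)"
  shows "n \<le> lee_weight n v"
proof -
  have "finite C" using code by (rule linear_code_finite)
  have "nonzero_weights n C = lee_weight n ` (C - {\<lambda>_. 0})"
    unfolding nonzero_weights_def by auto
  with \<open>finite C\<close> have "finite (nonzero_weights n C)" by simp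
  moreover have "lee_weight n v \<in> nonzero_weights n C"
    unfolding nonzero_weights_def using assms(3,4) by auto
  ultimately have min_le: "Min (nonzero_weights n C) \<le> lee_weight n v" by (rule Min_le)
  have "{\<lambda>_. 0, v} \<subseteq> C" using code \<open>v \<in> C\<close> unfolding linear_code_def by auto
  moreover have "card {\<lambda>_. 0, v} = 2" using \<open>v \<noteq> (\<lambda>_. 0)\<close> by simp
  ultimately have "2 \<le> card C" by (metis card_mono \<open>finite C\<close>)
  then have "1 \<le> real (card C) / (real (card C) - 1)" by (simp add: le_divide_eq)
  then have "real n \<le> real (card C) / (real (card C) - 1) * real n"
    using mult_right_mono[OF _ of_nat_0_le_iff] by fastforce
  then have "int n \<le> int (Min (nonzero_weights n C))"
    using opt unfolding plotkin_optimal_def by (simp add: le_floor_iff)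
  with min_le show ?thesis by simp
qed

lemma sum_lee_translation_invariant:
  fixes h :: "'a \<Rightarrow> z4"
  assumes "finite K" and closed: "\<And>k. k \<in> K \<Longrightarrow> (\<lambda>l. k l + h l) \<in> K"
    and involution: "\<And>l. h l + h l = 0" and "h j = 2"
  shows "(\<Sum>k\<in>K. lee (k j)) = card K"
proof -
  define t where "t k = (\<lambda>l. k l + h l)" for k
  have tt: "t (t k) = k" for k
    unfolding t_def by (simp add: add.assoc involution)
  have "t k \<in> K" if "k \<in> K" for k
    using closed[OF that] by (simp add: t_def)
  then have "bij_betw t K K"
    by (intro bij_betw_byWitness[where f' = t]) (auto simp: tt)
  then have "(\<Sum>k\<in>K. lee (k j)) = (\<Sum>k\<in>K. lee (k j + 2))"
    using sum.reindex_bij_betw[of t K K "\<lambda>k. lee (k j)"] \<open>h j = 2\<close> by (simp add: t_def)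
  then have "2 * (\<Sum>k\<in>K. lee (k j)) = (\<Sum>k\<in>K. lee (k j) + lee (k j + 2))"
    by (simp add: sum.distrib)
  also have "\<dots> = 2 * card K" by (simp add: lee_add_2)
  finally show ?thesis by simp
qed

lemma sum_lee_weight_translation_invariant:
  assumes "finite K"
    and "\<And>j. j < n \<Longrightarrow> \<exists>h. (\<forall>k\<in>K. (\<lambda>l. k l + h l) \<in> K) \<and> (\<forall>l. h l + h l = 0) \<and> h j = 2"
  shows "(\<Sum>k\<in>K. lee_weight n k) = n * card K"
proof -
  have "(\<Sum>k\<in>K. lee_weight n k) = (\<Sum>j<n. \<Sum>k\<in>K. lee (k j))"
    unfolding lee_weight_def by (rule sum.swap)
  also have "\<dots> = (\<Sum>j<n. card K)"
  proof (rule sum.cong)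
    fix j assume "j \<in> {..<n}"
    then obtain h where "\<forall>k\<in>K. (\<lambda>l. k l + h l) \<in> K" "\<forall>l. h l + h l = 0" "h j = 2"
      using assms(2) by blast
    then show "(\<Sum>k\<in>K. lee (k j)) = card K"
      using sum_lee_translation_invariant[OF assms(1)] by blast
  qed simp
  finally show ?thesis by simp
qed

lemma sum_eq_lower_bound_imp_eq:
  fixes w :: "'a \<Rightarrow> nat"
  assumes "finite K" and bound: "\<forall>k\<in>K. b \<le> w k" and sum: "(\<Sum>k\<in>K. w k) = b * card K"
    and "k \<in> K"
  shows "w k = b"
proof (rule ccontr)
  assume "w k \<noteq> b"
  with bound \<open>k \<in> K\<close> have "b < w k" by auto
  with bound \<open>k \<in> K\<close> have "(\<Sum>k\<in>K. b) < (\<Sum>k\<in>K. w k)"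
    by (intro sum_strict_mono_ex1[OF \<open>finite K\<close>]) auto
  with sum show False by (simp add: mult.commute)
qed

theorem corollary4p5:
  fixes n k1 k2 :: nat and C :: "(nat \<Rightarrow> z4) set" and G :: "nat \<Rightarrow> nat \<Rightarrow> z4"
  assumes "linear_code n C"
    and "code_type C k1 k2"
    and "projective n C"
    and "card (nonzero_weights n C) = 2"
    and "generator_matrix (k1 + k2) G C"
    and "plotkin_optimal n C"
  shows "\<forall>x\<in>vecs (k1 + k2). (\<exists>i<k1 + k2. x i \<notin> {0, 2}) \<longrightarrow>
           lee_weight n (lincomb {..<k1 + k2} x G) = n"
proof (intro ballI impI)
  fix x :: "nat \<Rightarrow> z4" assume "\<exists>i<k1 + k2. x i \<notin> {0, 2}"
  then obtain i where i: "i < k1 + k2" "x i \<notin> {0, 2}" by blast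
  let ?L = "\<lambda>y. lincomb {..<k1 + k2} y G"
  define K where "K = {?L y | y. y i \<notin> {0, 2}}"
  have C: "C = range ?L"
    using assms(5) unfolding generator_matrix_def row_span_def by auto
  have "finite K"
    using linear_code_finite[OF assms(1)] by (rule finite_subset[rotated]) (auto simp: K_def C)
  have weight_ge: "\<forall>k\<in>K. n \<le> lee_weight n k"
    using plotkin_optimal_lee_weight_ge[OF assms(6,1)] generator_matrix_lincomb_nonzero[OF assms(5) i(1)]
    by (auto simp: K_def C)
  have "(\<Sum>k\<in>K. lee_weight n k) = n * card K"
  proof (rule sum_lee_weight_translation_invariant[OF \<open>finite K\<close>])
    fix j assume "j < n"
    then obtain z where z: "?L z j \<notin> {0, 2}"
      using projective_coordinate_unit[OF assms(3)] C by auto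
    have "(\<lambda>l. k l + 2 * ?L z l) \<in> K" if "k \<in> K" for k
    proof -
      obtain y where y: "k = ?L y" "y i \<notin> {0, 2}" using \<open>k \<in> K\<close> K_def by auto
      then have "(\<lambda>l. k l + 2 * ?L z l) = ?L (\<lambda>l. y l + 2 * z l)"
        by (simp add: lincomb_add lincomb_cmult)
      moreover have "y i + 2 * z i \<notin> {0, 2}" using y(2) by (rule z4_unit_add_2_mult)
      ultimately show ?thesis unfolding K_def by auto
    qed
    then show "\<exists>h. (\<forall>k\<in>K. (\<lambda>l. k l + h l) \<in> K) \<and> (\<forall>l. h l + h l = 0) \<and> h j = 2"
      using z4_2_mult_add_self z4_2_mult_unit[OF z] by (intro exI[of _ "\<lambda>l. 2 * ?L z l"]) simp
  qed
  moreover have "?L x \<in> K" unfolding K_def using i(2) by blast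
  ultimately show "lee_weight n (?L x) = n"
    using sum_eq_lower_bound_imp_eq[OF \<open>finite K\<close> weight_ge] by blast
qed

end
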